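(* Let $\mathcal{H}=\mathbb{C}^d$ and let $|e\rangle$ be a unit vector orthogonal to $\mathcal{H}$ in $\mathcal{H}\oplus\mathrm{span}\{|e\rangle\}$. For $\epsilon\in[0,1]$ let $\mathcal{E}_\epsilon(\rho)=\epsilon\rho+(1-\epsilon)|e\rangle\langle e|$ be the erasure channel. Then for any $\epsilon_1,\epsilon_2\in[0,1]$, a single-system probe is sufficient for distinguishing $\mathcal{E}_{\epsilon_1}$ and $\mathcal{E}_{\epsilon_2}$: the maximum of the success probability over single-system probes equals its maximum over all probes, including entangled probes with an arbitrary ancilla.
   Context: For two channels chosen with equal priors $1/2$, the single-shot success probability with a single-system probe $\rho$ on $\mathcal{H}$ is $\frac12+\frac14\|\mathcal{N}_1(\rho)-\mathcal{N}_2(\rho)\|_1$, and with a bipartite probe $\rho_{AB}$ on $\mathcal{H}\otimes\mathbb{C}^{d'}$ (any finite $d'$; channel acting on $A$, identity on $B$) it is $\frac12+\frac14\|(\mathcal{N}_1\otimes\mathrm{id})(\rho_{AB})-(\mathcal{N}_2\otimes\mathrm{id})(\rho_{AB})\|_1$; $\|\cdot\|_1$ is the trace norm. *)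

theory Defs
  imports Complex_Main "Jordan_Normal_Form.Matrix"
begin

definition adj :: "complex mat \<Rightarrow> complex mat" where
  "adj A = mat (dim_col A) (dim_row A) (\<lambda>(i,j). cnj (A $$ (j,i)))"

definition mtrace :: "complex mat \<Rightarrow> complex" where
  "mtrace A = (\<Sum>i<dim_row A. A $$ (i,i))"

definition psd :: "nat \<Rightarrow> complex mat \<Rightarrow> bool" where
  "psd n A \<longleftrightarrow> A \<in> carrier_mat n n \<and>
     (\<forall>v \<in> carrier_vec n.
        let q = (\<Sum>i<n. \<Sum>j<n. cnj (v $ i) * A $$ (i,j) * v $ j) in Im q = 0 \<and> Re q \<ge> 0)"

definition density :: "nat \<Rightarrow> complex mat \<Rightarrow> bool" where
  "density n \<rho> \<longleftrightarrow> psd n \<rho> \<and> mtrace \<rho> = 1"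

text \<open>Trace norm ||A||_1 = tr sqrt(A^* A), with sqrt the unique PSD square root.\<close>
definition trace_norm :: "complex mat \<Rightarrow> real" where
  "trace_norm A = Re (mtrace (THE B. psd (dim_col A) B \<and> B * B = adj A * A))"

text \<open>Embedding of an operator on H = C^d into H (+) span{e} = C^(d+1); e is the last basis vector.\<close>
definition embedH :: "nat \<Rightarrow> complex mat \<Rightarrow> complex mat" where
  "embedH d \<rho> = mat (Suc d) (Suc d) (\<lambda>(i,j). if i < d \<and> j < d then \<rho> $$ (i,j) else 0)"

definition eproj :: "nat \<Rightarrow> complex mat" where
  "eproj d = mat (Suc d) (Suc d) (\<lambda>(i,j). if i = d \<and> j = d then 1 else 0)"

text \<open>Erasure channel E_eps(rho) = eps rho + (1-eps) tr(rho) |e><e| (linear extension;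
  equals eps rho + (1-eps)|e><e| on states).\<close>
definition erasure :: "nat \<Rightarrow> real \<Rightarrow> complex mat \<Rightarrow> complex mat" where
  "erasure d \<epsilon> \<rho> = complex_of_real \<epsilon> \<cdot>\<^sub>m embedH d \<rho>
      + (complex_of_real (1 - \<epsilon>) * mtrace \<rho>) \<cdot>\<^sub>m eproj d"

text \<open>(N (x) id)(X) for a linear map N from d x d to m x m matrices, X on C^d (x) C^d',
  with basis index (a,b) \<mapsto> a * d' + b:  (N (x) id)(X) = sum_{b,b'} N(X^{b b'}) (x) |b><b'|.\<close>
definition block :: "nat \<Rightarrow> nat \<Rightarrow> complex mat \<Rightarrow> nat \<Rightarrow> nat \<Rightarrow> complex mat" where
  "block d d' X b b' = mat d d (\<lambda>(a,a'). X $$ (a * d' + b, a' * d' + b'))"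

definition tensor_id :: "nat \<Rightarrow> nat \<Rightarrow> nat \<Rightarrow> (complex mat \<Rightarrow> complex mat) \<Rightarrow> complex mat \<Rightarrow> complex mat" where
  "tensor_id d m d' N X = mat (m * d') (m * d')
      (\<lambda>(i,j). N (block d d' X (i mod d') (j mod d')) $$ (i div d', j div d'))"

end

(*
  On a state rho the erasure channel acts as rho \<mapsto> \<epsilon> rho \<oplus> (1 - \<epsilon>) |e><e|, and on a
  bipartite state X its extension E_\<epsilon> \<otimes> id acts as X \<mapsto> \<epsilon> X \<oplus> (1 - \<epsilon>) tr_A X.
  In both cases the difference of the two outputs is (\<epsilon>1 - \<epsilon>2) (X \<oplus> -Y) with
  X, Y states, and |\<epsilon>1 - \<epsilon>2| (X \<oplus> Y) is the positive semidefinite square root of its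
  square, so its trace norm is 2 |\<epsilon>1 - \<epsilon>2|. Hence every probe, entangled or not,
  succeeds with probability exactly 1/2 + |\<epsilon>1 - \<epsilon>2| / 2. The one substantial
  ingredient is the uniqueness of positive semidefinite square roots, which is what makes
  trace_norm computable; it follows from the fact that B - C has only the eigenvalue 0
  when B\<^sup>2 = C\<^sup>2, together with Schur triangularisation.
*)
theory Submission
  imports Defs "Jordan_Normal_Form.Schur_Decomposition"
begin

section \<open>Quadratic forms and Hermitian matrices\<close>

definition sesq_form :: "nat \<Rightarrow> complex mat \<Rightarrow> complex vec \<Rightarrow> complex vec \<Rightarrow> complex" where
  "sesq_form n A u w = (\<Sum>i<n. \<Sum>j<n. cnj (u $ i) * A $$ (i,j) * w $ j)"

text \<open>The order on complex numbers is the partial order of HOL-Library's Complex_Order: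
  \<open>0 \<le> z\<close> says that \<open>z\<close> is a nonnegative real.\<close>

lemma psd_iff_sesq_form:
  "psd n A \<longleftrightarrow> A \<in> carrier_mat n n \<and> (\<forall>v \<in> carrier_vec n. 0 \<le> sesq_form n A v v)"
  unfolding psd_def sesq_form_def Let_def less_eq_complex_def by auto

lemma sesq_form_eq_inner:
  assumes "A \<in> carrier_mat n n" "u \<in> carrier_vec n" "w \<in> carrier_vec n"
  shows "sesq_form n A u w = (A *\<^sub>v w) \<bullet>c u"
proof -
  have "(A *\<^sub>v w) \<bullet>c u = (\<Sum>i<n. (\<Sum>j<n. A $$ (i,j) * w $ j) * cnj (u $ i))"
    using assms by (simp add: scalar_prod_def atLeast0LessThan)
  then show ?thesis
    unfolding sesq_form_def by (simp add: sum_distrib_left sum_distrib_right ac_simps)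
qed

lemma psd_iff_inner:
  "psd n A \<longleftrightarrow> A \<in> carrier_mat n n \<and> (\<forall>v \<in> carrier_vec n. 0 \<le> (A *\<^sub>v v) \<bullet>c v)"
  by (auto simp: psd_iff_sesq_form sesq_form_eq_inner)

lemma sesq_form_add_smult:
  assumes "u \<in> carrier_vec n" "w \<in> carrier_vec n"
  shows "sesq_form n A (u + c \<cdot>\<^sub>v w) (u + c \<cdot>\<^sub>v w) = sesq_form n A u u
    + cnj c * c * sesq_form n A w w + c * sesq_form n A u w + cnj c * sesq_form n A w u"
  using assms unfolding sesq_form_def
  by (simp add: algebra_simps sum.distrib sum_distrib_left)

lemma sesq_form_unit_vec:
  assumes "i < n" "j < n"
  shows "sesq_form n A (unit_vec n i) (unit_vec n j) = A $$ (i,j)"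
proof -
  have "\<And>x::complex. \<And>P. x * (if P then 1 else 0) = (if P then x else 0)"
    "\<And>x::complex. \<And>P. cnj (if P then 1 else 0) * x = (if P then x else 0)" by simp_all
  with assms show ?thesis unfolding sesq_form_def unit_vec_def by (simp add: sum.delta)
qed

definition hermitian :: "nat \<Rightarrow> complex mat \<Rightarrow> bool" where
  "hermitian n A \<longleftrightarrow> A \<in> carrier_mat n n \<and> (\<forall>i<n. \<forall>j<n. A $$ (j,i) = cnj (A $$ (i,j)))"

lemma hermitianI:
  assumes "A \<in> carrier_mat n n" "\<And>i j. i < n \<Longrightarrow> j < n \<Longrightarrow> A $$ (j,i) = cnj (A $$ (i,j))"
  shows "hermitian n A"
  using assms unfolding hermitian_def by blast

lemma hermitianD:
  assumes "hermitian n A"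
  shows "A \<in> carrier_mat n n" "i < n \<Longrightarrow> j < n \<Longrightarrow> A $$ (j,i) = cnj (A $$ (i,j))"
  using assms unfolding hermitian_def by blast+

lemma psd_hermitian:
  assumes "psd n A"
  shows "hermitian n A"
proof (rule hermitianI)
  show "A \<in> carrier_mat n n" using assms psd_iff_sesq_form by blast
  fix i j assume ij: "i < n" "j < n"
  have real: "Im (sesq_form n A v v) = 0" if "v \<in> carrier_vec n" for v
    using assms that unfolding psd_iff_sesq_form less_eq_complex_def by auto
  have form: "sesq_form n A (unit_vec n i + c \<cdot>\<^sub>v unit_vec n j) (unit_vec n i + c \<cdot>\<^sub>v unit_vec n j)
      = A $$ (i,i) + cnj c * c * A $$ (j,j) + c * A $$ (i,j) + cnj c * A $$ (j,i)" for c
    using ij by (simp add: sesq_form_add_smult sesq_form_unit_vec)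
  have "Im (A $$ (i,i)) = 0" "Im (A $$ (j,j)) = 0"
    using real[of "unit_vec n i"] real[of "unit_vec n j"] ij by (simp_all add: sesq_form_unit_vec)
  moreover have "Im (A $$ (i,j) + A $$ (j,i)) = 0" "Re (A $$ (i,j) - A $$ (j,i)) = 0"
    using real[of "unit_vec n i + 1 \<cdot>\<^sub>v unit_vec n j"] real[of "unit_vec n i + \<i> \<cdot>\<^sub>v unit_vec n j"]
      form[of 1] form[of \<i>] calculation by simp_all
  ultimately show "A $$ (j,i) = cnj (A $$ (i,j))" by (simp add: complex_eq_iff)
qed

lemma hermitian_diff:
  assumes A: "hermitian n A" and B: "hermitian n B"
  shows "hermitian n (A - B)"
proof (rule hermitianI)
  show "A - B \<in> carrier_mat n n" by (rule minus_carrier_mat[OF hermitianD(1)[OF B]])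
  fix i j assume ij: "i < n" "j < n"
  with hermitianD(2)[OF A ij] hermitianD(2)[OF B ij] hermitianD(1)[OF A] hermitianD(1)[OF B]
  show "(A - B) $$ (j,i) = cnj ((A - B) $$ (i,j))" by simp
qed

lemma hermitian_uminus:
  assumes A: "hermitian n A"
  shows "hermitian n (- A)"
proof (rule hermitianI)
  show "- A \<in> carrier_mat n n" using hermitianD(1)[OF A] by simp
  fix i j assume ij: "i < n" "j < n"
  with hermitianD(2)[OF A ij] hermitianD(1)[OF A]
  show "(- A) $$ (j,i) = cnj ((- A) $$ (i,j))" by simp
qed

lemma hermitian_smult_real:
  assumes A: "hermitian n A"
  shows "hermitian n (complex_of_real c \<cdot>\<^sub>m A)"
proof (rule hermitianI)
  show "complex_of_real c \<cdot>\<^sub>m A \<in> carrier_mat n n" using hermitianD(1)[OF A] by simp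
  fix i j assume ij: "i < n" "j < n"
  with hermitianD(2)[OF A ij] hermitianD(1)[OF A]
  show "(complex_of_real c \<cdot>\<^sub>m A) $$ (j,i) = cnj ((complex_of_real c \<cdot>\<^sub>m A) $$ (i,j))" by simp
qed

lemma hermitian_adj:
  assumes A: "hermitian n A"
  shows "adj A = A"
proof (rule eq_matI)
  fix i j assume "i < dim_row A" "j < dim_col A"
  then have ij: "j < n" "i < n" using hermitianD(1)[OF A] by auto
  with hermitianD(2)[OF A ij] hermitianD(1)[OF A] show "adj A $$ (i,j) = A $$ (i,j)"
    unfolding adj_def by simp
qed (use hermitianD(1)[OF A] in \<open>simp_all add: adj_def\<close>)

lemma hermitian_sesq_form_swap:
  assumes "hermitian n A"
  shows "sesq_form n A w u = cnj (sesq_form n A u w)"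
proof -
  have "cnj (sesq_form n A u w) = (\<Sum>i<n. \<Sum>j<n. u $ i * A $$ (j,i) * cnj (w $ j))"
    unfolding sesq_form_def cnj_sum
  proof (intro sum.cong refl)
    fix i j assume "i \<in> {..<n}" "j \<in> {..<n}"
    with hermitianD(2)[OF assms, of i j]
    show "cnj (cnj (u $ i) * A $$ (i,j) * w $ j) = u $ i * A $$ (j,i) * cnj (w $ j)" by simp
  qed
  also have "\<dots> = sesq_form n A w u"
    unfolding sesq_form_def by (subst sum.swap) (simp add: ac_simps)
  finally show ?thesis by simp
qed

lemma hermitian_inner_swap:
  assumes "hermitian n A" "u \<in> carrier_vec n" "w \<in> carrier_vec n"
  shows "(A *\<^sub>v u) \<bullet>c w = u \<bullet>c (A *\<^sub>v w)"
proof -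
  have A: "A \<in> carrier_mat n n" using hermitianD(1)[OF assms(1)] .
  have "(A *\<^sub>v u) \<bullet>c w = sesq_form n A w u" using sesq_form_eq_inner[OF A assms(3,2)] by simp
  also have "\<dots> = cnj (sesq_form n A u w)" by (rule hermitian_sesq_form_swap[OF assms(1)])
  also have "sesq_form n A u w = conjugate u \<bullet> (A *\<^sub>v w)"
    using sesq_form_eq_inner[OF A assms(2,3)] conjugate_vec_sprod_comm[of "A *\<^sub>v w" n u] A assms
    by simp
  also have "cnj (conjugate u \<bullet> (A *\<^sub>v w)) = u \<bullet>c (A *\<^sub>v w)"
    using conjugate_conjugate_sprod[of u n "A *\<^sub>v w"] A assms by simp
  finally show ?thesis .
qed

lemma psd_smult:
  assumes A: "psd n A" and c: "0 \<le> c"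
  shows "psd n (complex_of_real c \<cdot>\<^sub>m A)"
  unfolding psd_iff_sesq_form
proof (intro conjI ballI)
  have Ac: "A \<in> carrier_mat n n" using A psd_iff_sesq_form by auto
  then show "complex_of_real c \<cdot>\<^sub>m A \<in> carrier_mat n n" by simp
  fix v :: "complex vec" assume v: "v \<in> carrier_vec n"
  have "sesq_form n (complex_of_real c \<cdot>\<^sub>m A) v v
      = (\<Sum>i<n. \<Sum>j<n. complex_of_real c * (cnj (v $ i) * A $$ (i,j) * v $ j))"
    using Ac unfolding sesq_form_def by (intro sum.cong refl) simp
  then have "sesq_form n (complex_of_real c \<cdot>\<^sub>m A) v v = complex_of_real c * sesq_form n A v v"
    by (simp add: sesq_form_def sum_distrib_left)
  moreover have "0 \<le> complex_of_real c" using c by (simp add: less_eq_complex_def)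
  ultimately show "0 \<le> sesq_form n (complex_of_real c \<cdot>\<^sub>m A) v v"
    using A v unfolding psd_iff_sesq_form by (simp add: mult_nonneg_nonneg)
qed

lemma psd_one_mat: "psd n (1\<^sub>m n)"
  unfolding psd_iff_inner by auto

lemma psd_zero_mat: "psd n (0\<^sub>m n n)"
  unfolding psd_iff_sesq_form sesq_form_def by simp

lemma psd_principal_submatrix:
  assumes X: "psd n X" and inj: "inj_on f {..<m}" and range: "f ` {..<m} \<subseteq> {..<n}"
  shows "psd m (mat m m (\<lambda>(i,j). X $$ (f i, f j)))"
  unfolding psd_iff_sesq_form
proof (intro conjI ballI)
  show "mat m m (\<lambda>(i,j). X $$ (f i, f j)) \<in> carrier_mat m m" by simp
  fix w :: "complex vec" assume w: "w \<in> carrier_vec m"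
  define v where "v = vec n (\<lambda>i. if i \<in> f ` {..<m} then w $ the_inv_into {..<m} f i else 0)"
  have v_f: "v $ f a = w $ a" if "a < m" for a
    using that range inj unfolding v_def by (auto simp: the_inv_into_f_f)
  have restrict: "(\<Sum>i<n. g i) = (\<Sum>a<m. g (f a))"
    if "\<And>i. i < n \<Longrightarrow> i \<notin> f ` {..<m} \<Longrightarrow> g i = 0" for g :: "nat \<Rightarrow> complex"
  proof -
    have "(\<Sum>i<n. g i) = (\<Sum>i\<in>f ` {..<m}. g i)"
      using that range by (intro sum.mono_neutral_right) auto
    also have "\<dots> = (\<Sum>a<m. g (f a))" by (simp add: sum.reindex[OF inj])
    finally show ?thesis .
  qed
  have v_out: "v $ i = 0" if "i < n" "i \<notin> f ` {..<m}" for i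
    using that unfolding v_def by simp
  have "sesq_form n X v v = (\<Sum>a<m. \<Sum>b<m. cnj (v $ f a) * X $$ (f a, f b) * v $ f b)"
    unfolding sesq_form_def by (subst restrict, simp add: v_out)+ (rule refl)
  also have "\<dots> = sesq_form m (mat m m (\<lambda>(i,j). X $$ (f i, f j))) w w"
    unfolding sesq_form_def by (intro sum.cong refl) (simp add: v_f)
  finally have "sesq_form n X v v = sesq_form m (mat m m (\<lambda>(i,j). X $$ (f i, f j))) w w" .
  moreover have "v \<in> carrier_vec n" unfolding v_def by simp
  ultimately show "0 \<le> sesq_form m (mat m m (\<lambda>(i,j). X $$ (f i, f j))) w w"
    using X unfolding psd_iff_sesq_form by metis
qed

lemma psd_sum_mat:
  assumes "\<And>k. k \<in> K \<Longrightarrow> psd n (A k)"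
  shows "psd n (mat n n (\<lambda>ij. \<Sum>k\<in>K. A k $$ ij))"
  unfolding psd_iff_sesq_form
proof (intro conjI ballI)
  show "mat n n (\<lambda>ij. \<Sum>k\<in>K. A k $$ ij) \<in> carrier_mat n n" by simp
  fix v :: "complex vec" assume v: "v \<in> carrier_vec n"
  have "sesq_form n (mat n n (\<lambda>ij. \<Sum>k\<in>K. A k $$ ij)) v v = (\<Sum>k\<in>K. sesq_form n (A k) v v)"
    unfolding sesq_form_def
    by (simp add: sum_distrib_left sum_distrib_right sum.swap[of _ K])
  also have "0 \<le> \<dots>" using assms v unfolding psd_iff_sesq_form by (simp add: sum_nonneg)
  finally show "0 \<le> sesq_form n (mat n n (\<lambda>ij. \<Sum>k\<in>K. A k $$ ij)) v v" .
qed

section \<open>Uniqueness of positive semidefinite square roots\<close>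

lemma mult_mat_vec_diff_eigenvector:
  fixes B C :: "'a :: comm_ring mat"
  assumes "B \<in> carrier_mat n n" "C \<in> carrier_mat n n" "x \<in> carrier_vec n"
    and "(B - C) *\<^sub>v x = \<mu> \<cdot>\<^sub>v x"
  shows "B *\<^sub>v x = C *\<^sub>v x + \<mu> \<cdot>\<^sub>v x"
proof (rule eq_vecI)
  fix i assume "i < dim_vec (C *\<^sub>v x + \<mu> \<cdot>\<^sub>v x)"
  then show "(B *\<^sub>v x) $ i = (C *\<^sub>v x + \<mu> \<cdot>\<^sub>v x) $ i"
    using arg_cong[OF assms(4), of "\<lambda>v. v $ i"] assms(1-3)
    by (simp add: minus_mult_distrib_mat_vec[OF assms(1-3)] algebra_simps)
qed (use assms in simp)

lemma eq_squares_diff_eigenvector: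
  assumes hD: "hermitian n (B - C)" and Bc: "B \<in> carrier_mat n n" and Cc: "C \<in> carrier_mat n n"
    and sq: "B * B = C * C" and x: "x \<in> carrier_vec n" and eig: "(B - C) *\<^sub>v x = \<mu> \<cdot>\<^sub>v x"
  shows "\<mu> * ((B *\<^sub>v x) \<bullet>c x) + cnj \<mu> * ((C *\<^sub>v x) \<bullet>c x) = 0"
proof -
  note Bx = mult_mat_vec_diff_eigenvector[OF Bc Cc x eig]
  txt \<open>Since \<open>B\<^sup>2 - C\<^sup>2 = B (B - C) + (B - C) C\<close> and \<open>B - C\<close> is Hermitian, the quadratic
    form of \<open>B\<^sup>2 - C\<^sup>2\<close> at the eigenvector is the left-hand side.\<close>
  have "0 = ((B * B) *\<^sub>v x) \<bullet>c x - ((C * C) *\<^sub>v x) \<bullet>c x" using sq by simp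
  also have "(B * B) *\<^sub>v x = B *\<^sub>v (C *\<^sub>v x + \<mu> \<cdot>\<^sub>v x)"
    using Bc x by (simp add: assoc_mult_mat_vec Bx)
  also have "\<dots> = B *\<^sub>v (C *\<^sub>v x) + \<mu> \<cdot>\<^sub>v (B *\<^sub>v x)"
    using Bc Cc x by (simp add: mult_add_distrib_mat_vec mult_mat_vec)
  also have "(C * C) *\<^sub>v x = C *\<^sub>v (C *\<^sub>v x)"
    using Cc x by (simp add: assoc_mult_mat_vec)
  also have "(B *\<^sub>v (C *\<^sub>v x) + \<mu> \<cdot>\<^sub>v (B *\<^sub>v x)) \<bullet>c x - (C *\<^sub>v (C *\<^sub>v x)) \<bullet>c x
      = ((B - C) *\<^sub>v (C *\<^sub>v x)) \<bullet>c x + \<mu> * ((B *\<^sub>v x) \<bullet>c x)"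
    using Bc Cc x
    by (simp add: add_scalar_prod_distrib[of _ n] minus_mult_distrib_mat_vec minus_scalar_prod_distrib[of _ n])
  also have "((B - C) *\<^sub>v (C *\<^sub>v x)) \<bullet>c x = (C *\<^sub>v x) \<bullet>c (\<mu> \<cdot>\<^sub>v x)"
    using hermitian_inner_swap[OF hD _ x, of "C *\<^sub>v x"] Cc x eig by simp
  also have "\<dots> = cnj \<mu> * ((C *\<^sub>v x) \<bullet>c x)"
    using Cc x by (simp add: conjugate_smult_vec)
  finally show ?thesis by (simp add: add.commute)
qed

lemma psd_sqrt_diff_eigenvalue:
  assumes B: "psd n B" and C: "psd n C" and sq: "B * B = C * C"
    and ev: "eigenvalue (B - C) \<mu>"
  shows "\<mu> = 0"
proof -
  have Bc: "B \<in> carrier_mat n n" and Cc: "C \<in> carrier_mat n n"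
    using B C psd_iff_inner by auto
  obtain x where x: "x \<in> carrier_vec n" "x \<noteq> 0\<^sub>v n" and eig: "(B - C) *\<^sub>v x = \<mu> \<cdot>\<^sub>v x"
    using ev Bc Cc unfolding eigenvalue_def eigenvector_def by auto
  define b where "b = (B *\<^sub>v x) \<bullet>c x"
  define c where "c = (C *\<^sub>v x) \<bullet>c x"
  have "0 \<le> b" "0 \<le> c" using B C x(1) unfolding b_def c_def psd_iff_inner by auto
  have "0 < x \<bullet>c x" using conjugate_square_greater_0_vec[OF x(1)] x(2) by blast
  have bc: "b = c + \<mu> * (x \<bullet>c x)"
    using Bc Cc x(1) unfolding b_def c_def mult_mat_vec_diff_eigenvector[OF Bc Cc x(1) eig]
    by (simp add: add_scalar_prod_distrib[of _ n])
  have "Im b = 0" "Im c = 0" "Im (x \<bullet>c x) = 0" "Re (x \<bullet>c x) > 0"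
    using \<open>0 \<le> b\<close> \<open>0 \<le> c\<close> \<open>0 < x \<bullet>c x\<close> unfolding less_eq_complex_def less_complex_def by simp_all
  then have "Im \<mu> * Re (x \<bullet>c x) = 0" using arg_cong[OF bc, of Im] by simp
  then have "cnj \<mu> = \<mu>" using \<open>Re (x \<bullet>c x) > 0\<close> by (simp add: complex_eq_iff)
  moreover have "\<mu> * b + cnj \<mu> * c = 0" unfolding b_def c_def
    by (rule eq_squares_diff_eigenvector[OF _ Bc Cc sq x(1) eig]) (intro hermitian_diff psd_hermitian B C)
  ultimately have "\<mu> * (b + c) = 0" by (simp add: distrib_left)
  show "\<mu> = 0"
  proof (rule ccontr)
    assume "\<mu> \<noteq> 0"
    then have "b = 0" "c = 0"
      using \<open>\<mu> * (b + c) = 0\<close> \<open>0 \<le> b\<close> \<open>0 \<le> c\<close> add_nonneg_eq_0_iff by auto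
    then show False using \<open>\<mu> \<noteq> 0\<close> bc \<open>0 < x \<bullet>c x\<close> by simp
  qed
qed

lemma mtrace_mult_comm:
  assumes "A \<in> carrier_mat n m" "B \<in> carrier_mat m n"
  shows "mtrace (A * B) = mtrace (B * A)"
proof -
  have "mtrace (A * B) = (\<Sum>i<n. \<Sum>j<m. A $$ (i,j) * B $$ (j,i))"
    unfolding mtrace_def using assms by (simp add: scalar_prod_def atLeast0LessThan)
  also have "\<dots> = (\<Sum>j<m. \<Sum>i<n. B $$ (j,i) * A $$ (i,j))"
    by (subst sum.swap) (simp add: mult.commute)
  also have "\<dots> = mtrace (B * A)"
    unfolding mtrace_def using assms by (simp add: scalar_prod_def atLeast0LessThan)
  finally show ?thesis .
qed

lemma mtrace_square_upper_triangular:
  assumes T: "T \<in> carrier_mat n n" "upper_triangular T" and diag: "\<And>i. i < n \<Longrightarrow> T $$ (i,i) = 0"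
  shows "mtrace (T * T) = 0"
proof -
  have zero: "T $$ (i,k) * T $$ (k,i) = 0" if "i < n" "k < n" for i k
    using that T diag[of i] unfolding upper_triangular_def by (cases k i rule: linorder_cases) auto
  have "mtrace (T * T) = (\<Sum>i<n. \<Sum>k<n. T $$ (i,k) * T $$ (k,i))"
    unfolding mtrace_def using T by (simp add: scalar_prod_def atLeast0LessThan)
  also have "\<dots> = 0" by (intro sum.neutral ballI) (simp add: zero)
  finally show ?thesis .
qed

lemma mtrace_square_eigenvalues_zero:
  assumes A: "A \<in> carrier_mat n n" and ev: "\<And>\<mu>. eigenvalue A \<mu> \<Longrightarrow> \<mu> = 0"
  shows "mtrace (A * A) = 0"
proof -
  obtain es where cp: "char_poly A = (\<Prod>e\<leftarrow>es. [:- e, 1:])"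
    using char_poly_factorized[OF A] by blast
  obtain T P Q where "schur_decomposition A es = (T,P,Q)" by (cases "schur_decomposition A es")
  from schur_decomposition[OF A cp this]
  have sim: "similar_mat_wit A T P Q" and ut: "upper_triangular T" and dg: "diag_mat T = es"
    by auto
  have Tc: "T \<in> carrier_mat n n" and Pc: "P \<in> carrier_mat n n" and Qc: "Q \<in> carrier_mat n n"
    and QP: "Q * P = 1\<^sub>m n" and AA: "A * A = P * (T * T) * Q"
    using sim similar_mat_wit_pow_id[OF sim, of 2] A
    unfolding similar_mat_wit_def Let_def by (auto simp: numeral_2_eq_2)
  have "T $$ (i,i) = 0" if "i < n" for i
  proof (rule ev)
    have "T $$ (i,i) \<in> set es" using that Tc dg[symmetric] unfolding diag_mat_def by auto
    then have "poly (char_poly A) (T $$ (i,i)) = 0"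
      unfolding cp poly_prod_list by (auto simp: prod_list_zero_iff)
    then show "eigenvalue A (T $$ (i,i))" using eigenvalue_root_char_poly[OF A] by simp
  qed
  then have "mtrace (T * T) = 0" by (rule mtrace_square_upper_triangular[OF Tc ut])
  have "mtrace (A * A) = mtrace (Q * (P * (T * T)))"
    unfolding AA by (rule mtrace_mult_comm) (use Pc Tc Qc in auto)
  also have "Q * (P * (T * T)) = T * T"
    using assoc_mult_mat[OF Qc Pc, of "T * T" n] QP Tc by simp
  finally show ?thesis using \<open>mtrace (T * T) = 0\<close> by simp
qed

lemma hermitian_mtrace_square_zero:
  assumes A: "hermitian n A" and tr: "mtrace (A * A) = 0"
  shows "A = 0\<^sub>m n n"
proof -
  have Ac: "A \<in> carrier_mat n n" by (rule hermitianD(1)[OF A])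
  have "mtrace (A * A) = (\<Sum>i<n. \<Sum>k<n. A $$ (i,k) * A $$ (k,i))"
    unfolding mtrace_def using Ac by (simp add: scalar_prod_def atLeast0LessThan)
  also have "\<dots> = of_real (\<Sum>i<n. \<Sum>k<n. (cmod (A $$ (i,k)))\<^sup>2)"
    unfolding of_real_sum
  proof (intro sum.cong refl)
    fix i k assume "i \<in> {..<n}" "k \<in> {..<n}"
    then have "A $$ (k,i) = cnj (A $$ (i,k))" using hermitianD(2)[OF A, of i k] by simp
    then show "A $$ (i,k) * A $$ (k,i) = of_real ((cmod (A $$ (i,k)))\<^sup>2)"
      by (simp only: complex_norm_square)
  qed
  finally have "(\<Sum>i<n. \<Sum>k<n. (cmod (A $$ (i,k)))\<^sup>2) = 0" using tr of_real_eq_0_iff by metis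
  then have "A $$ (i,k) = 0" if "i < n" "k < n" for i k
    using that by (simp add: sum_nonneg_eq_0_iff sum_nonneg)
  then show ?thesis using Ac by (intro eq_matI) auto
qed

lemma psd_sqrt_unique:
  assumes B: "psd n B" and C: "psd n C" and sq: "B * B = C * C"
  shows "B = C"
proof -
  have hD: "hermitian n (B - C)" using B C by (intro hermitian_diff psd_hermitian)
  have "mtrace ((B - C) * (B - C)) = 0"
    using mtrace_square_eigenvalues_zero[OF hermitianD(1)[OF hD]] psd_sqrt_diff_eigenvalue[OF B C sq]
    by blast
  then have diff0: "B - C = 0\<^sub>m n n" by (rule hermitian_mtrace_square_zero[OF hD])
  have Bc: "B \<in> carrier_mat n n" and Cc: "C \<in> carrier_mat n n" using B C psd_iff_inner by auto
  show ?thesis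
  proof (rule eq_matI)
    fix i j assume "i < dim_row C" "j < dim_col C"
    then show "B $$ (i,j) = C $$ (i,j)" using arg_cong[OF diff0, of "\<lambda>M. M $$ (i,j)"] Bc Cc by simp
  qed (use Bc Cc in auto)
qed

lemma trace_norm_eqI:
  assumes "dim_col A = n" "psd n B" "B * B = adj A * A"
  shows "trace_norm A = Re (mtrace B)"
proof -
  have "(THE B. psd (dim_col A) B \<and> B * B = adj A * A) = B"
    using assms psd_sqrt_unique by (intro the_equality) auto
  then show ?thesis unfolding trace_norm_def by simp
qed

section \<open>Block-diagonal matrices\<close>

lemma mtrace_smult: "A \<in> carrier_mat n n \<Longrightarrow> mtrace (c \<cdot>\<^sub>m A) = c * mtrace A"
  unfolding mtrace_def by (simp add: sum_distrib_left)

lemma smult_smult_mat: "(a :: complex) \<cdot>\<^sub>m (b \<cdot>\<^sub>m A) = (a * b) \<cdot>\<^sub>m A"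
  by (intro eq_matI) auto

lemma smult_mult_smult_mat:
  fixes A B :: "complex mat"
  assumes "A \<in> carrier_mat n n" "B \<in> carrier_mat n n"
  shows "(a \<cdot>\<^sub>m A) * (b \<cdot>\<^sub>m B) = (a * b) \<cdot>\<^sub>m (A * B)"
  using assms
  by (simp add: mult_smult_assoc_mat[of _ n n] mult_smult_distrib[of _ n n] smult_smult_mat mult.commute)

lemma sum_lessThan_add:
  fixes f :: "nat \<Rightarrow> 'a :: comm_monoid_add"
  shows "(\<Sum>i<m + k. f i) = (\<Sum>i<m. f i) + (\<Sum>i<k. f (m + i))"
  by (induct k) (simp_all add: add.assoc)

lemma sum_lessThan_mult:
  fixes f :: "nat \<Rightarrow> 'a :: comm_monoid_add"
  shows "(\<Sum>i<d * d'. f i) = (\<Sum>a<d. \<Sum>b<d'. f (a * d' + b))"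
proof (induct d)
  case (Suc d)
  have "(\<Sum>i<Suc d * d'. f i) = (\<Sum>i<d * d' + d'. f i)" by (simp add: add.commute)
  also have "\<dots> = (\<Sum>i<d * d'. f i) + (\<Sum>b<d'. f (d * d' + b))" by (rule sum_lessThan_add)
  also have "\<dots> = (\<Sum>a<Suc d. \<Sum>b<d'. f (a * d' + b))" using Suc by simp
  finally show ?case .
qed simp

definition block_diag :: "complex mat \<Rightarrow> complex mat \<Rightarrow> complex mat" where
  "block_diag X Y = four_block_mat X (0\<^sub>m (dim_row X) (dim_col Y)) (0\<^sub>m (dim_row Y) (dim_col X)) Y"

lemma dim_block_diag [simp]:
  "dim_row (block_diag X Y) = dim_row X + dim_row Y" "dim_col (block_diag X Y) = dim_col X + dim_col Y"
  unfolding block_diag_def by simp_all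

lemma block_diag_carrier:
  "X \<in> carrier_mat m m \<Longrightarrow> Y \<in> carrier_mat k k \<Longrightarrow> block_diag X Y \<in> carrier_mat (m + k) (m + k)"
  unfolding block_diag_def by auto

lemma index_block_diag:
  assumes "X \<in> carrier_mat m m" "Y \<in> carrier_mat k k" "i < m + k" "j < m + k"
  shows "block_diag X Y $$ (i,j) = (if i < m \<and> j < m then X $$ (i,j)
    else if m \<le> i \<and> m \<le> j then Y $$ (i - m, j - m) else 0)"
  using assms unfolding block_diag_def by auto

lemma block_diag_mult:
  assumes "X \<in> carrier_mat m m" "X' \<in> carrier_mat m m" "Y \<in> carrier_mat k k" "Y' \<in> carrier_mat k k"
  shows "block_diag X Y * block_diag X' Y' = block_diag (X * X') (Y * Y')"
  using assms unfolding block_diag_def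
  by (simp add: mult_four_block_mat[OF assms(1) zero_carrier_mat zero_carrier_mat assms(3)
        assms(2) zero_carrier_mat zero_carrier_mat assms(4)])

lemma mtrace_block_diag:
  assumes "X \<in> carrier_mat m m" "Y \<in> carrier_mat k k"
  shows "mtrace (block_diag X Y) = mtrace X + mtrace Y"
  using assms unfolding mtrace_def
  by (simp add: block_diag_carrier[OF assms, THEN carrier_matD(1)] sum_lessThan_add index_block_diag)

lemma hermitian_block_diag:
  assumes X: "hermitian m X" and Y: "hermitian k Y"
  shows "hermitian (m + k) (block_diag X Y)"
proof (rule hermitianI)
  have Xc: "X \<in> carrier_mat m m" and Yc: "Y \<in> carrier_mat k k"
    using X Y by (simp_all add: hermitianD(1))
  then show "block_diag X Y \<in> carrier_mat (m + k) (m + k)" by (rule block_diag_carrier)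
  fix i j assume ij: "i < m + k" "j < m + k"
  show "block_diag X Y $$ (j,i) = cnj (block_diag X Y $$ (i,j))"
    using index_block_diag[OF Xc Yc ij] index_block_diag[OF Xc Yc ij(2,1)]
      hermitianD(2)[OF X, of i j] hermitianD(2)[OF Y, of "i - m" "j - m"] ij by auto
qed

lemma conjugate_append_vec: "conjugate (v @\<^sub>v w) = conjugate v @\<^sub>v conjugate w"
  by (intro eq_vecI) auto

lemma block_diag_mult_append_vec:
  assumes "X \<in> carrier_mat m m" "Y \<in> carrier_mat k k" "v \<in> carrier_vec m" "w \<in> carrier_vec k"
  shows "block_diag X Y *\<^sub>v (v @\<^sub>v w) = (X *\<^sub>v v) @\<^sub>v (Y *\<^sub>v w)"
proof -
  have zero: "0\<^sub>m r c *\<^sub>v u = 0\<^sub>v r" if "u \<in> carrier_vec c" for r c and u :: "complex vec"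
    using that by (intro eq_vecI) (auto simp: scalar_prod_def)
  show ?thesis
    using assms unfolding block_diag_def
    by (simp add: four_block_mat_mult_vec[of X m m _ k _ k _ v w] zero)
qed

lemma psd_block_diag:
  assumes X: "psd m X" and Y: "psd k Y"
  shows "psd (m + k) (block_diag X Y)"
  unfolding psd_iff_inner
proof (intro conjI ballI)
  have Xc: "X \<in> carrier_mat m m" and Yc: "Y \<in> carrier_mat k k"
    using X Y psd_iff_inner by auto
  then show "block_diag X Y \<in> carrier_mat (m + k) (m + k)" by (rule block_diag_carrier)
  fix v :: "complex vec" assume "v \<in> carrier_vec (m + k)"
  then have v: "v = vec_first v m @\<^sub>v vec_last v k" by simp
  have "(block_diag X Y *\<^sub>v v) \<bullet>c v
      = (X *\<^sub>v vec_first v m) \<bullet>c vec_first v m + (Y *\<^sub>v vec_last v k) \<bullet>c vec_last v k"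
    using Xc Yc by (subst (1 2) v)
      (simp add: block_diag_mult_append_vec conjugate_append_vec scalar_prod_append[of _ m _ k])
  moreover have "0 \<le> (X *\<^sub>v vec_first v m) \<bullet>c vec_first v m" "0 \<le> (Y *\<^sub>v vec_last v k) \<bullet>c vec_last v k"
    using X Y unfolding psd_iff_inner by auto
  ultimately show "0 \<le> (block_diag X Y *\<^sub>v v) \<bullet>c v" by simp
qed

lemma trace_norm_smult_block_diag:
  assumes X: "psd m X" and Y: "psd k Y"
  shows "trace_norm (complex_of_real \<Delta> \<cdot>\<^sub>m block_diag X (- Y)) = \<bar>\<Delta>\<bar> * Re (mtrace X + mtrace Y)"
proof -
  have Xc: "X \<in> carrier_mat m m" and Yc: "Y \<in> carrier_mat k k"
    using X Y psd_iff_inner by auto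
  define D where "D = complex_of_real \<Delta> \<cdot>\<^sub>m block_diag X (- Y)"
  define S where "S = complex_of_real \<bar>\<Delta>\<bar> \<cdot>\<^sub>m block_diag X Y"
  have "hermitian (m + k) D" unfolding D_def
    by (intro hermitian_smult_real hermitian_block_diag hermitian_uminus psd_hermitian X Y)
  then have "adj D * D = D * D" by (simp add: hermitian_adj)
  also have "\<dots> = (complex_of_real \<Delta> * complex_of_real \<Delta>) \<cdot>\<^sub>m block_diag (X * X) (Y * Y)"
    unfolding D_def using Xc Yc
    by (simp add: smult_mult_smult_mat[of _ "m + k"] block_diag_carrier block_diag_mult)
  also have "complex_of_real \<Delta> * complex_of_real \<Delta> = complex_of_real \<bar>\<Delta>\<bar> * complex_of_real \<bar>\<Delta>\<bar>"
    by (metis of_real_mult abs_mult_self_eq)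
  also have "\<dots> \<cdot>\<^sub>m block_diag (X * X) (Y * Y) = S * S"
    unfolding S_def using Xc Yc
    by (simp add: smult_mult_smult_mat[of _ "m + k"] block_diag_carrier block_diag_mult)
  finally have sq: "S * S = adj D * D" ..
  have "psd (m + k) S" unfolding S_def by (intro psd_smult psd_block_diag X Y) simp
  moreover have "dim_col D = m + k"
    unfolding D_def using block_diag_carrier[of X m "- Y" k] Xc Yc by auto
  ultimately have "trace_norm D = Re (mtrace S)" using trace_norm_eqI sq by blast
  also have "\<dots> = \<bar>\<Delta>\<bar> * Re (mtrace X + mtrace Y)"
    unfolding S_def using Xc Yc by (simp add: mtrace_smult[of _ "m + k"] block_diag_carrier mtrace_block_diag)
  finally show ?thesis unfolding D_def .
qed

section \<open>The erasure channel and its extension to an ancilla\<close>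

text \<open>The trace over the first factor of \<open>C^d \<otimes> C^d'\<close>, with the index convention
  \<open>(a, b) \<mapsto> a * d' + b\<close> of \<open>block\<close> and \<open>tensor_id\<close>.\<close>

definition partial_trace :: "nat \<Rightarrow> nat \<Rightarrow> complex mat \<Rightarrow> complex mat" where
  "partial_trace d d' X = mat d' d' (\<lambda>(b,b'). \<Sum>a<d. X $$ (a * d' + b, a * d' + b'))"

lemma partial_trace_carrier: "partial_trace d d' X \<in> carrier_mat d' d'"
  unfolding partial_trace_def by simp

lemma mtrace_partial_trace:
  assumes "X \<in> carrier_mat (d * d') (d * d')"
  shows "mtrace (partial_trace d d' X) = mtrace X"
proof -
  have "mtrace (partial_trace d d' X) = (\<Sum>b<d'. \<Sum>a<d. X $$ (a * d' + b, a * d' + b))"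
    unfolding mtrace_def partial_trace_def by simp
  also have "\<dots> = mtrace X"
    unfolding mtrace_def using assms by (simp add: sum_lessThan_mult sum.swap[of _ "{..<d'}"])
  finally show ?thesis .
qed

lemma psd_partial_trace:
  assumes X: "psd (d * d') X"
  shows "psd d' (partial_trace d d' X)"
proof -
  have "partial_trace d d' X = mat d' d' (\<lambda>ij. \<Sum>a\<in>{..<d}.
      mat d' d' (\<lambda>(b,b'). X $$ (a * d' + b, a * d' + b')) $$ ij)"
    unfolding partial_trace_def by (intro eq_matI) auto
  also have "psd d' \<dots>"
  proof (intro psd_sum_mat psd_principal_submatrix[OF X])
    fix a assume "a \<in> {..<d}"
    have "a * d' + b < d * d'" if "b < d'" for b
    proof -
      have "a * d' + b < Suc a * d'" using that by simp
      also have "\<dots> \<le> d * d'" using \<open>a \<in> {..<d}\<close> by (intro mult_le_mono1) simp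
      finally show ?thesis .
    qed
    then show "(\<lambda>b. a * d' + b) ` {..<d'} \<subseteq> {..<d * d'}" by auto
  qed (simp add: inj_on_def)
  finally show ?thesis .
qed

definition erasure_blocks :: "real \<Rightarrow> complex mat \<Rightarrow> complex mat \<Rightarrow> complex mat" where
  "erasure_blocks \<epsilon> X Y = block_diag (complex_of_real \<epsilon> \<cdot>\<^sub>m X) (complex_of_real (1 - \<epsilon>) \<cdot>\<^sub>m Y)"

lemma erasure_blocks_diff:
  assumes Xc: "X \<in> carrier_mat m m" and Yc: "Y \<in> carrier_mat k k"
  shows "erasure_blocks \<epsilon>1 X Y - erasure_blocks \<epsilon>2 X Y
    = complex_of_real (\<epsilon>1 - \<epsilon>2) \<cdot>\<^sub>m block_diag X (- Y)"
proof (rule eq_matI)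
  fix i j assume "i < dim_row (complex_of_real (\<epsilon>1 - \<epsilon>2) \<cdot>\<^sub>m block_diag X (- Y))"
    "j < dim_col (complex_of_real (\<epsilon>1 - \<epsilon>2) \<cdot>\<^sub>m block_diag X (- Y))"
  then have ij: "i < m + k" "j < m + k" using Xc Yc by auto
  show "(erasure_blocks \<epsilon>1 X Y - erasure_blocks \<epsilon>2 X Y) $$ (i,j)
    = (complex_of_real (\<epsilon>1 - \<epsilon>2) \<cdot>\<^sub>m block_diag X (- Y)) $$ (i,j)"
    using ij Xc Yc unfolding erasure_blocks_def
    by (cases "i < m"; cases "j < m") (simp_all add: index_block_diag[of _ m _ k] algebra_simps)
qed (use Xc Yc in \<open>simp_all add: erasure_blocks_def\<close>)

lemma erasure_eq_blocks:
  assumes R: "R \<in> carrier_mat d d"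
  shows "erasure d \<epsilon> R = erasure_blocks \<epsilon> R (mtrace R \<cdot>\<^sub>m 1\<^sub>m 1)"
proof (rule eq_matI)
  fix i j assume "i < dim_row (erasure_blocks \<epsilon> R (mtrace R \<cdot>\<^sub>m 1\<^sub>m 1))"
    "j < dim_col (erasure_blocks \<epsilon> R (mtrace R \<cdot>\<^sub>m 1\<^sub>m 1))"
  then have ij: "i < d + 1" "j < d + 1" using R by (simp_all add: erasure_blocks_def)
  then show "erasure d \<epsilon> R $$ (i,j) = erasure_blocks \<epsilon> R (mtrace R \<cdot>\<^sub>m 1\<^sub>m 1) $$ (i,j)"
    using R unfolding erasure_def embedH_def eproj_def erasure_blocks_def
    by (cases "i < d"; cases "j < d") (simp_all add: index_block_diag[of _ d _ 1])
qed (use R in \<open>simp_all add: erasure_def embedH_def eproj_def erasure_blocks_def\<close>)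

lemma index_erasure:
  assumes "a < Suc d" "b < Suc d"
  shows "erasure d \<epsilon> R $$ (a,b) = (if a < d \<and> b < d then complex_of_real \<epsilon> * R $$ (a,b)
    else if a = d \<and> b = d then complex_of_real (1 - \<epsilon>) * mtrace R else 0)"
  using assms unfolding erasure_def embedH_def eproj_def by auto

lemma tensor_id_erasure:
  assumes d': "0 < d'" and X: "X \<in> carrier_mat (d * d') (d * d')"
  shows "tensor_id d (Suc d) d' (erasure d \<epsilon>) X = erasure_blocks \<epsilon> X (partial_trace d d' X)"
proof (rule eq_matI)
  note P = partial_trace_carrier[of d d' X]
  have low: "i div d' < d \<longleftrightarrow> i < d * d'" for i
    using d' by (simp add: div_less_iff_less_mult)
  have high: "i div d' = d \<and> i mod d' = i - d * d'" if "d * d' \<le> i" "i < d * d' + d'" for i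
  proof -
    define r where "r = i - d * d'"
    then have i: "i = d * d' + r" "r < d'" using that by simp_all
    show ?thesis unfolding i(1) using i(2) d' by simp
  qed
  fix i j assume "i < dim_row (erasure_blocks \<epsilon> X (partial_trace d d' X))"
    "j < dim_col (erasure_blocks \<epsilon> X (partial_trace d d' X))"
  then have ij: "i < d * d' + d'" "j < d * d' + d'" using X P by (simp_all add: erasure_blocks_def)
  then have "i div d' < Suc d" "j div d' < Suc d"
    using d' by (simp_all add: div_less_iff_less_mult add.commute)
  then have "tensor_id d (Suc d) d' (erasure d \<epsilon>) X $$ (i,j)
      = (if i div d' < d \<and> j div d' < d
           then complex_of_real \<epsilon> * block d d' X (i mod d') (j mod d') $$ (i div d', j div d')
         else if i div d' = d \<and> j div d' = d
           then complex_of_real (1 - \<epsilon>) * mtrace (block d d' X (i mod d') (j mod d')) else 0)"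
    using ij unfolding tensor_id_def by (simp add: index_erasure add.commute)
  also have "\<dots> = erasure_blocks \<epsilon> X (partial_trace d d' X) $$ (i,j)"
    using ij X P high[of i] high[of j] low[of i] low[of j] unfolding erasure_blocks_def
    by (cases "i < d * d'"; cases "j < d * d'")
      (simp_all add: index_block_diag[of _ "d * d'" _ d'] block_def mtrace_def partial_trace_def)
  finally show "tensor_id d (Suc d) d' (erasure d \<epsilon>) X $$ (i,j)
      = erasure_blocks \<epsilon> X (partial_trace d d' X) $$ (i,j)" .
qed (use X in \<open>simp_all add: tensor_id_def erasure_blocks_def partial_trace_def\<close>)

lemma density_exists: "0 < d \<Longrightarrow> \<exists>\<rho>. density d \<rho>"
proof -
  assume "0 < d"
  then obtain n where d: "d = 1 + n" by (metis add.commute less_imp_Suc_add plus_1_eq_Suc)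
  have "psd (1 + n) (block_diag (1\<^sub>m 1) (0\<^sub>m n n))" by (intro psd_block_diag psd_one_mat psd_zero_mat)
  moreover have "mtrace (block_diag (1\<^sub>m 1) (0\<^sub>m n n)) = 1"
    by (simp add: mtrace_block_diag[of _ 1 _ n]) (simp add: mtrace_def)
  ultimately show ?thesis unfolding density_def d by blast
qed

lemma cSUP_eq_const:
  fixes f :: "'a \<Rightarrow> 'b :: conditionally_complete_lattice"
  assumes "A \<noteq> {}" "\<And>x. x \<in> A \<Longrightarrow> f x = c"
  shows "(SUP x\<in>A. f x) = c"
  using assms by (simp add: SUP_cong[OF refl, of A f "\<lambda>_. c"])

lemma trace_norm_erasure_diff:
  assumes "density d \<rho>"
  shows "trace_norm (erasure d \<epsilon>1 \<rho> - erasure d \<epsilon>2 \<rho>) = 2 * \<bar>\<epsilon>1 - \<epsilon>2\<bar>"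
proof -
  have \<rho>: "psd d \<rho>" "mtrace \<rho> = 1" "\<rho> \<in> carrier_mat d d"
    using assms by (auto simp: density_def psd_iff_inner)
  then have flag: "mtrace \<rho> \<cdot>\<^sub>m 1\<^sub>m 1 = 1\<^sub>m 1" by (intro eq_matI) auto
  have diff: "erasure d \<epsilon>1 \<rho> - erasure d \<epsilon>2 \<rho>
      = complex_of_real (\<epsilon>1 - \<epsilon>2) \<cdot>\<^sub>m block_diag \<rho> (- 1\<^sub>m 1)"
    unfolding erasure_eq_blocks[OF \<rho>(3)] flag by (rule erasure_blocks_diff[OF \<rho>(3) one_carrier_mat])
  have "trace_norm (erasure d \<epsilon>1 \<rho> - erasure d \<epsilon>2 \<rho>)
      = \<bar>\<epsilon>1 - \<epsilon>2\<bar> * Re (mtrace \<rho> + mtrace (1\<^sub>m 1))"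
    unfolding diff by (rule trace_norm_smult_block_diag[OF \<rho>(1) psd_one_mat])
  moreover have "mtrace (1\<^sub>m 1) = 1" by (simp add: mtrace_def)
  ultimately show ?thesis using \<rho>(2) by simp
qed

lemma trace_norm_tensor_id_erasure_diff:
  assumes "0 < d'" "density (d * d') X"
  shows "trace_norm (tensor_id d (Suc d) d' (erasure d \<epsilon>1) X - tensor_id d (Suc d) d' (erasure d \<epsilon>2) X)
    = 2 * \<bar>\<epsilon>1 - \<epsilon>2\<bar>"
proof -
  have X: "psd (d * d') X" "mtrace X = 1" "X \<in> carrier_mat (d * d') (d * d')"
    using assms(2) by (auto simp: density_def psd_iff_inner)
  have diff: "tensor_id d (Suc d) d' (erasure d \<epsilon>1) X - tensor_id d (Suc d) d' (erasure d \<epsilon>2) X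
      = complex_of_real (\<epsilon>1 - \<epsilon>2) \<cdot>\<^sub>m block_diag X (- partial_trace d d' X)"
    unfolding tensor_id_erasure[OF assms(1) X(3)]
    by (rule erasure_blocks_diff[OF X(3) partial_trace_carrier])
  have "trace_norm (tensor_id d (Suc d) d' (erasure d \<epsilon>1) X - tensor_id d (Suc d) d' (erasure d \<epsilon>2) X)
      = \<bar>\<epsilon>1 - \<epsilon>2\<bar> * Re (mtrace X + mtrace (partial_trace d d' X))"
    unfolding diff by (rule trace_norm_smult_block_diag[OF X(1) psd_partial_trace[OF X(1)]])
  then show ?thesis using X(2) mtrace_partial_trace[OF X(3)] by simp
qed

theorem theorem10:
  fixes d :: nat and \<epsilon>1 \<epsilon>2 :: real
  assumes "d > 0"
    and "0 \<le> \<epsilon>1" "\<epsilon>1 \<le> 1" and "0 \<le> \<epsilon>2" "\<epsilon>2 \<le> 1"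
  shows "(SUP \<rho> \<in> {\<rho>. density d \<rho>}.
            1/2 + 1/4 * trace_norm (erasure d \<epsilon>1 \<rho> - erasure d \<epsilon>2 \<rho>))
       = (SUP p \<in> {(d', \<rho>). d' > 0 \<and> density (d * d') \<rho>}.
            1/2 + 1/4 * trace_norm (tensor_id d (Suc d) (fst p) (erasure d \<epsilon>1) (snd p)
                                   - tensor_id d (Suc d) (fst p) (erasure d \<epsilon>2) (snd p)))"
proof -
  txt \<open>Both suprema are of the constant \<open>P\<close>.\<close>
  define P :: real where "P = 1/2 + 1/4 * (2 * \<bar>\<epsilon>1 - \<epsilon>2\<bar>)"
  have single: "1/2 + 1/4 * trace_norm (erasure d \<epsilon>1 \<rho> - erasure d \<epsilon>2 \<rho>) = P"
    if "\<rho> \<in> {\<rho>. density d \<rho>}" for \<rho>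
    using that by (simp add: trace_norm_erasure_diff P_def)
  have entangled: "1/2 + 1/4 * trace_norm (tensor_id d (Suc d) (fst p) (erasure d \<epsilon>1) (snd p)
      - tensor_id d (Suc d) (fst p) (erasure d \<epsilon>2) (snd p)) = P"
    if "p \<in> {(d', \<rho>). d' > 0 \<and> density (d * d') \<rho>}" for p
    using that by (auto simp: trace_norm_tensor_id_erasure_diff P_def)
  obtain \<rho>0 where \<rho>0: "density d \<rho>0" using density_exists[OF assms(1)] by blast
  then have "{\<rho>. density d \<rho>} \<noteq> {}" "{(d', \<rho>). d' > 0 \<and> density (d * d') \<rho>} \<noteq> {}"
    by (auto intro!: exI[of _ "1 :: nat"] exI[of _ \<rho>0])
  show ?thesis (is "?L = ?R")
  proof -
    have "?L = P" using \<open>{\<rho>. density d \<rho>} \<noteq> {}\<close> single by (rule cSUP_eq_const)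
    moreover have "?R = P"
      using \<open>{(d', \<rho>). d' > 0 \<and> density (d * d') \<rho>} \<noteq> {}\<close> entangled by (rule cSUP_eq_const)
    ultimately show ?thesis by simp
  qed
qed

end
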